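(* Let $T:\mathcal{M}_d\to\mathcal{M}_d$ be a doubly stochastic, primitive quantum channel. Then the function $k\mapsto\alpha_2((T^* )^kT^k-\text{id}_d)$, $k\in\mathbb{N}$, is monotone increasing (non-decreasing).
   Context: Doubly stochastic channel: completely positive, trace preserving, $T(\mathbb{1})=T^*(\mathbb{1})=\mathbb{1}$ ($T^*$ the Hilbert–Schmidt adjoint). Primitive: $T^k(\rho)\to\mathbb{1}_d/d$ for all states. For a Liouvillian $\mathcal{L}$ on $\mathcal{M}_d$ with $\mathcal{L}(\mathbb{1})=0$: $\alpha_2(\mathcal{L})=\inf_{X>0}\mathcal{E}^2_{\mathcal{L}}(X)/\text{Ent}_2(X)$ over positive definite $X$, with $\mathcal{E}^2_{\mathcal{L}}(X)=-\frac1d\text{tr}[\mathcal{L}(X)X]$ and $\text{Ent}_2(X)=\frac1{2d}\text{tr}[X^2(\log\frac{X^2}{\text{tr}(X^2)}+\log d)]$. *)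

theory Defs
  imports Complex_Main "Jordan_Normal_Form.Matrix"
begin

text \<open>Matrices in M_d are complex d x d matrices (carrier_mat d d).\<close>

definition mtrace :: "complex mat \<Rightarrow> complex" where
  "mtrace A = (\<Sum>i<dim_row A. A $$ (i,i))"

definition madj :: "complex mat \<Rightarrow> complex mat" where
  "madj A = Matrix.mat (dim_col A) (dim_row A) (\<lambda>(i,j). cnj (A $$ (j,i)))"

definition qform :: "nat \<Rightarrow> complex mat \<Rightarrow> complex vec \<Rightarrow> complex" where
  "qform d A v = (\<Sum>i<d. \<Sum>j<d. cnj (v $ i) * A $$ (i,j) * v $ j)"

definition psd :: "nat \<Rightarrow> complex mat \<Rightarrow> bool" where
  "psd d A \<longleftrightarrow> A \<in> carrier_mat d d \<and>
     (\<forall>v \<in> carrier_vec d. Im (qform d A v) = 0 \<and> Re (qform d A v) \<ge> 0)"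

definition pd :: "nat \<Rightarrow> complex mat \<Rightarrow> bool" where
  "pd d A \<longleftrightarrow> A \<in> carrier_mat d d \<and>
     (\<forall>v \<in> carrier_vec d. Im (qform d A v) = 0 \<and>
        (v \<noteq> 0\<^sub>v d \<longrightarrow> Re (qform d A v) > 0))"

definition unitary_mat :: "nat \<Rightarrow> complex mat \<Rightarrow> bool" where
  "unitary_mat d U \<longleftrightarrow> U \<in> carrier_mat d d \<and> U * madj U = 1\<^sub>m d \<and> madj U * U = 1\<^sub>m d"

text \<open>Functional calculus for Hermitian matrices via the spectral decomposition
  A = U diag(lam) U^*, f(A) = U diag(f(lam)) U^* (well defined for Hermitian A).\<close>
definition mat_fun :: "nat \<Rightarrow> (real \<Rightarrow> real) \<Rightarrow> complex mat \<Rightarrow> complex mat" where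
  "mat_fun d f A = (SOME B. \<exists>U (lam :: nat \<Rightarrow> real). unitary_mat d U \<and>
      A = U * mat_diag d (\<lambda>i. complex_of_real (lam i)) * madj U \<and>
      B = U * mat_diag d (\<lambda>i. complex_of_real (f (lam i))) * madj U)"

definition mat_log :: "nat \<Rightarrow> complex mat \<Rightarrow> complex mat" where
  "mat_log d A = mat_fun d ln A"

definition lin_map :: "nat \<Rightarrow> (complex mat \<Rightarrow> complex mat) \<Rightarrow> bool" where
  "lin_map d T \<longleftrightarrow> (\<forall>A \<in> carrier_mat d d. T A \<in> carrier_mat d d) \<and>
     (\<forall>A \<in> carrier_mat d d. \<forall>B \<in> carrier_mat d d. T (A + B) = T A + T B) \<and>
     (\<forall>A \<in> carrier_mat d d. \<forall>c. T (c \<cdot>\<^sub>m A) = c \<cdot>\<^sub>m T A)"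

text \<open>Ampliation T \<otimes> id_k acting on (k*d) x (k*d) matrices viewed as k x k block matrices
  with d x d blocks.\<close>
definition ampl :: "nat \<Rightarrow> nat \<Rightarrow> (complex mat \<Rightarrow> complex mat) \<Rightarrow> complex mat \<Rightarrow> complex mat" where
  "ampl d k T M = Matrix.mat (k*d) (k*d) (\<lambda>(p,q).
     T (Matrix.mat d d (\<lambda>(i,j). M $$ ((p div d) * d + i, (q div d) * d + j))) $$ (p mod d, q mod d))"

definition completely_positive :: "nat \<Rightarrow> (complex mat \<Rightarrow> complex mat) \<Rightarrow> bool" where
  "completely_positive d T \<longleftrightarrow> (\<forall>k M. psd (k*d) M \<longrightarrow> psd (k*d) (ampl d k T M))"

definition trace_preserving :: "nat \<Rightarrow> (complex mat \<Rightarrow> complex mat) \<Rightarrow> bool" where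
  "trace_preserving d T \<longleftrightarrow> (\<forall>A \<in> carrier_mat d d. mtrace (T A) = mtrace A)"

definition quantum_channel :: "nat \<Rightarrow> (complex mat \<Rightarrow> complex mat) \<Rightarrow> bool" where
  "quantum_channel d T \<longleftrightarrow> lin_map d T \<and> completely_positive d T \<and> trace_preserving d T"

definition hs_adjoint :: "nat \<Rightarrow> (complex mat \<Rightarrow> complex mat) \<Rightarrow> (complex mat \<Rightarrow> complex mat) \<Rightarrow> bool" where
  "hs_adjoint d T Ts \<longleftrightarrow> lin_map d Ts \<and>
     (\<forall>A \<in> carrier_mat d d. \<forall>B \<in> carrier_mat d d. mtrace (madj (Ts A) * B) = mtrace (madj A * T B))"

definition doubly_stochastic :: "nat \<Rightarrow> (complex mat \<Rightarrow> complex mat) \<Rightarrow> (complex mat \<Rightarrow> complex mat) \<Rightarrow> bool" where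
  "doubly_stochastic d T Ts \<longleftrightarrow> quantum_channel d T \<and> hs_adjoint d T Ts \<and>
     T (1\<^sub>m d) = 1\<^sub>m d \<and> Ts (1\<^sub>m d) = 1\<^sub>m d"

definition is_state :: "nat \<Rightarrow> complex mat \<Rightarrow> bool" where
  "is_state d \<rho> \<longleftrightarrow> psd d \<rho> \<and> mtrace \<rho> = 1"

definition primitive :: "nat \<Rightarrow> (complex mat \<Rightarrow> complex mat) \<Rightarrow> bool" where
  "primitive d T \<longleftrightarrow> (\<forall>\<rho>. is_state d \<rho> \<longrightarrow> (\<forall>i<d. \<forall>j<d.
      (\<lambda>k. (T ^^ k) \<rho> $$ (i,j)) \<longlonglongrightarrow> (if i = j then 1 / of_nat d else 0)))"

definition dirichlet2 :: "nat \<Rightarrow> (complex mat \<Rightarrow> complex mat) \<Rightarrow> complex mat \<Rightarrow> real" where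
  "dirichlet2 d L X = - (1 / real d) * Re (mtrace (L X * X))"

definition ent2 :: "nat \<Rightarrow> complex mat \<Rightarrow> real" where
  "ent2 d X = (1 / (2 * real d)) * Re (mtrace (X * X *
      (mat_log d ((1 / mtrace (X * X)) \<cdot>\<^sub>m (X * X)) + complex_of_real (ln (real d)) \<cdot>\<^sub>m 1\<^sub>m d)))"

text \<open>Log-Sobolev-2 constant; the infimum ranges over positive definite X with nonzero entropy
  (Ent_2(X) = 0 exactly for X proportional to the identity, where the quotient is undefined).\<close>
definition alpha2 :: "nat \<Rightarrow> (complex mat \<Rightarrow> complex mat) \<Rightarrow> real" where
  "alpha2 d L = Inf {dirichlet2 d L X / ent2 d X | X. pd d X \<and> ent2 d X \<noteq> 0}"

end

theory Submission
  imports Defs "Jordan_Normal_Form.Schur_Decomposition" "Jordan_Normal_Form.Spectral_Radius"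
begin

(* By Hilbert-Schmidt adjointness, the Dirichlet form of Ts^k T^k - id (Ts the adjoint of T)
   at a Hermitian X is (||X||_2^2 - ||T^k X||_2^2) / d.  A unital, trace-preserving, completely
   positive T satisfies the Kadison-Schwarz inequality T(Y)^* T(Y) <= T(Y^* Y); taking traces,
   T contracts the Hilbert-Schmidt norm.  So for every X the Dirichlet form is nonnegative and
   nondecreasing in k.  The entropy Ent_2(X) is nonnegative by Gibbs' inequality applied to the
   eigenvalues of X^2 / tr X^2, so every quotient in the infimum defining alpha_2 is
   nondecreasing in k, and hence so is alpha_2. *)

section \<open>Adjoints and traces\<close>

lemma madj_dims[simp]: "dim_row (madj A) = dim_col A" "dim_col (madj A) = dim_row A"
  by (auto simp: madj_def)

lemma madj_carrier[simp]: "A \<in> carrier_mat n m \<Longrightarrow> madj A \<in> carrier_mat m n"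
  by (auto simp: madj_def)

lemma madj_index[simp]: "i < dim_col A \<Longrightarrow> j < dim_row A \<Longrightarrow> madj A $$ (i,j) = cnj (A $$ (j,i))"
  by (auto simp: madj_def)

lemma madj_madj[simp]: "madj (madj A) = A"
  by (rule eq_matI) auto

lemma madj_mult: assumes "A \<in> carrier_mat n m" "B \<in> carrier_mat m p"
  shows "madj (A * B) = madj B * madj A"
  using assms by (intro eq_matI) (auto simp: scalar_prod_def cnj_sum intro!: sum.cong)

lemma madj_mult_eq:
  assumes "A \<in> carrier_mat m n" "B \<in> carrier_mat m p"
  shows "madj A * B = Matrix.mat n p (\<lambda>(i,j). \<Sum>r<m. cnj (A $$ (r,i)) * B $$ (r,j))"
  using assms by (intro eq_matI) (auto simp: scalar_prod_def atLeast0LessThan)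

lemma hermitian_if_qform_real:
  assumes real: "\<And>v. v \<in> carrier_vec n \<Longrightarrow> Im (qform n A v) = 0"
    and "i < n" "j < n"
  shows "A $$ (j,i) = cnj (A $$ (i,j))"
proof -
  let ?e = "\<lambda>a b. vec n (\<lambda>k. if k = i then a else if k = j then b else 0)"
  have qform_e: "qform n A (?e a b) = (\<Sum>p\<in>{i,j}. \<Sum>q\<in>{i,j}.
      cnj (?e a b $ p) * A $$ (p,q) * ?e a b $ q)" for a b
  proof -
    have "qform n A (?e a b) = (\<Sum>p<n. \<Sum>q\<in>{i,j}. cnj (?e a b $ p) * A $$ (p,q) * ?e a b $ q)"
      unfolding qform_def using assms(2,3) by (intro sum.cong refl sum.mono_neutral_right) auto
    also have "\<dots> = (\<Sum>p\<in>{i,j}. \<Sum>q\<in>{i,j}. cnj (?e a b $ p) * A $$ (p,q) * ?e a b $ q)"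
      using assms(2,3) by (intro sum.mono_neutral_right) auto
    finally show ?thesis .
  qed
  have diag: "Im (A $$ (k,k)) = 0" if "k \<in> {i,j}" for k
    using real[of "?e 1 0"] real[of "?e 0 1"] that assms(2,3) unfolding qform_e
    by (cases "i = j") auto
  show ?thesis
  proof (cases "i = j")
    case True
    then show ?thesis using diag by (simp add: complex_eq_iff)
  next
    case False
    have "Im (A $$ (i,j) + A $$ (j,i)) = 0"
      using real[of "?e 1 1"] diag False assms(2,3) unfolding qform_e by simp
    moreover have "Re (A $$ (i,j)) = Re (A $$ (j,i))"
      using real[of "?e 1 \<i>"] diag False assms(2,3) unfolding qform_e by simp
    ultimately show ?thesis by (simp add: complex_eq_iff)
  qed
qed

lemma qform_zero: "qform n A (0\<^sub>v n) = 0"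
  by (simp add: qform_def)

lemma madj_eq_if_hermitian:
  assumes "A \<in> carrier_mat n n" "\<And>i j. i < n \<Longrightarrow> j < n \<Longrightarrow> A $$ (j,i) = cnj (A $$ (i,j))"
  shows "madj A = A"
proof (rule eq_matI)
  fix i j assume ij: "i < dim_row A" "j < dim_col A"
  then have "madj A $$ (i,j) = cnj (A $$ (j,i))" using assms(1) by simp
  also have "\<dots> = A $$ (i,j)" using assms ij by (metis carrier_matD complex_cnj_cnj)
  finally show "madj A $$ (i,j) = A $$ (i,j)" .
qed (use assms in auto)

lemma psd_madj:
  assumes "psd n A"
  shows "madj A = A"
proof (rule madj_eq_if_hermitian)
  show "A \<in> carrier_mat n n" using assms by (simp add: psd_def)
  show "A $$ (j,i) = cnj (A $$ (i,j))" if "i < n" "j < n" for i j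
    using that assms by (intro hermitian_if_qform_real) (auto simp: psd_def)
qed

lemma psd_if_pd:
  assumes "pd n A"
  shows "psd n A"
  unfolding psd_def
proof (intro conjI ballI)
  show "A \<in> carrier_mat n n" using assms by (simp add: pd_def)
  fix v :: "complex vec" assume v: "v \<in> carrier_vec n"
  show "Im (qform n A v) = 0" using assms v by (simp add: pd_def)
  show "Re (qform n A v) \<ge> 0"
  proof (cases "v = 0\<^sub>v n")
    case True
    then show ?thesis by (simp add: qform_zero)
  next
    case False
    then show ?thesis using assms v by (simp add: pd_def less_imp_le)
  qed
qed

lemma pd_madj: "pd n A \<Longrightarrow> madj A = A"
  by (rule psd_madj[OF psd_if_pd])

lemma hermitian_index:
  assumes "madj A = A" "A \<in> carrier_mat n n" "i < n" "j < n"
  shows "A $$ (j,i) = cnj (A $$ (i,j))"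
proof -
  have "A $$ (j,i) = madj A $$ (j,i)" using assms(1) by simp
  also have "\<dots> = cnj (A $$ (i,j))" by (rule madj_index) (use assms(2-4) in auto)
  finally show ?thesis .
qed

lemma mtrace_mult_comm: assumes "A \<in> carrier_mat n m" "B \<in> carrier_mat m n"
  shows "mtrace (A * B) = mtrace (B * A)"
proof -
  have "mtrace (A * B) = (\<Sum>i<n. \<Sum>k<m. A $$ (i,k) * B $$ (k,i))"
    using assms by (auto simp: mtrace_def scalar_prod_def atLeast0LessThan intro!: sum.cong)
  also have "\<dots> = (\<Sum>k<m. \<Sum>i<n. B $$ (k,i) * A $$ (i,k))"
    by (subst sum.swap) (simp add: mult.commute)
  also have "\<dots> = mtrace (B * A)"
    using assms by (auto simp: mtrace_def scalar_prod_def atLeast0LessThan intro!: sum.cong)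
  finally show ?thesis .
qed

lemma mtrace_madj: "A \<in> carrier_mat n n \<Longrightarrow> mtrace (madj A) = cnj (mtrace A)"
  by (auto simp: mtrace_def cnj_sum)

lemma mtrace_add: "A \<in> carrier_mat n n \<Longrightarrow> B \<in> carrier_mat n n \<Longrightarrow> mtrace (A + B) = mtrace A + mtrace B"
  by (auto simp: mtrace_def sum.distrib)

lemma mtrace_minus: "A \<in> carrier_mat n n \<Longrightarrow> B \<in> carrier_mat n n \<Longrightarrow> mtrace (A - B) = mtrace A - mtrace B"
  by (auto simp: mtrace_def sum_subtractf)

lemma mtrace_smult: "A \<in> carrier_mat n n \<Longrightarrow> mtrace (c \<cdot>\<^sub>m A) = c * mtrace A"
  by (auto simp: mtrace_def sum_distrib_left)

lemma mtrace_diag: "mtrace (mat_diag n f) = (\<Sum>i<n. f i)"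
  by (simp add: mtrace_def mat_diag_def)

lemma mtrace_mult_add_smult_one:
  assumes "A \<in> carrier_mat n n" "B \<in> carrier_mat n n"
  shows "mtrace (A * (B + c \<cdot>\<^sub>m 1\<^sub>m n)) = mtrace (A * B) + c * mtrace A"
proof -
  have "A * (c \<cdot>\<^sub>m 1\<^sub>m n) = c \<cdot>\<^sub>m A"
    using mult_smult_distrib[OF assms(1) one_carrier_mat, of c] assms(1) by simp
  then have "A * (B + c \<cdot>\<^sub>m 1\<^sub>m n) = A * B + c \<cdot>\<^sub>m A"
    using assms by (simp add: mult_add_distrib_mat)
  then show ?thesis
    using mtrace_add[OF mult_carrier_mat[OF assms] smult_carrier_mat[OF assms(1)]] mtrace_smult[OF assms(1)]
    by simp
qed

definition hs_norm_sq :: "complex mat \<Rightarrow> real" where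
  "hs_norm_sq A = Re (mtrace (madj A * A))"

lemma mtrace_madj_mult_self:
  assumes "A \<in> carrier_mat n m"
  shows "mtrace (madj A * A) = complex_of_real (\<Sum>j<m. \<Sum>k<n. (cmod (A $$ (k,j)))\<^sup>2)"
proof -
  have "mtrace (madj A * A) = (\<Sum>j<m. \<Sum>k<n. cnj (A $$ (k,j)) * A $$ (k,j))"
    using assms by (simp add: mtrace_def madj_mult_eq)
  also have "\<dots> = (\<Sum>j<m. \<Sum>k<n. complex_of_real ((cmod (A $$ (k,j)))\<^sup>2))"
    by (intro sum.cong refl) (subst complex_norm_square, simp only: mult.commute)
  finally show ?thesis by simp
qed

lemma hs_norm_sq_eq:
  "A \<in> carrier_mat n m \<Longrightarrow> hs_norm_sq A = (\<Sum>j<m. \<Sum>k<n. (cmod (A $$ (k,j)))\<^sup>2)"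
  by (simp add: hs_norm_sq_def mtrace_madj_mult_self)

lemma hs_norm_sq_pos:
  assumes "A \<in> carrier_mat n m" "i < n" "j < m" "A $$ (i,j) \<noteq> 0"
  shows "hs_norm_sq A > 0"
proof -
  have "0 < (cmod (A $$ (i,j)))\<^sup>2" using assms(4) by simp
  also have "\<dots> \<le> (\<Sum>k<n. (cmod (A $$ (k,j)))\<^sup>2)"
    using assms(2) by (intro member_le_sum) auto
  also have "\<dots> \<le> (\<Sum>j<m. \<Sum>k<n. (cmod (A $$ (k,j)))\<^sup>2)"
    using assms(3) by (intro member_le_sum sum_nonneg) auto
  finally show ?thesis using hs_norm_sq_eq[OF assms(1)] by simp
qed

lemma qform_gram:
  assumes "W \<in> carrier_mat m n"
  shows "qform n (madj W * W) v = complex_of_real (\<Sum>r<m. (cmod (\<Sum>q<n. W $$ (r,q) * v $ q))\<^sup>2)"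
proof -
  have "qform n (madj W * W) v =
      (\<Sum>p<n. \<Sum>q<n. \<Sum>r<m. cnj (W $$ (r,p) * v $ p) * (W $$ (r,q) * v $ q))"
    unfolding qform_def madj_mult_eq[OF assms assms]
    by (intro sum.cong refl) (simp add: sum_distrib_left sum_distrib_right mult.assoc mult.left_commute)
  also have "\<dots> = (\<Sum>r<m. \<Sum>p<n. \<Sum>q<n. cnj (W $$ (r,p) * v $ p) * (W $$ (r,q) * v $ q))"
    by (subst sum.swap, rule sum.cong[OF refl], rule sum.swap)
  also have "\<dots> = (\<Sum>r<m. cnj (\<Sum>p<n. W $$ (r,p) * v $ p) * (\<Sum>q<n. W $$ (r,q) * v $ q))"
    by (simp only: cnj_sum sum_product)
  also have "\<dots> = (\<Sum>r<m. complex_of_real ((cmod (\<Sum>q<n. W $$ (r,q) * v $ q))\<^sup>2))"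
    by (intro sum.cong refl) (subst complex_norm_square, simp only: mult.commute)
  finally show ?thesis by simp
qed

lemma psd_gram: "W \<in> carrier_mat m n \<Longrightarrow> psd n (madj W * W)"
  unfolding psd_def by (auto simp: qform_gram intro: sum_nonneg)


section \<open>The spectral theorem for Hermitian matrices\<close>

definition vec_norm_sq :: "nat \<Rightarrow> complex vec \<Rightarrow> real" where
  "vec_norm_sq n w = (\<Sum>i<n. (cmod (w $ i))\<^sup>2)"

lemma cscalar_self_eq_vec_norm_sq:
  assumes "w \<in> carrier_vec n"
  shows "w \<bullet>c w = complex_of_real (vec_norm_sq n w)"
proof -
  have "w \<bullet>c w = (\<Sum>i<n. w $ i * cnj (w $ i))"
    using assms by (auto simp: scalar_prod_def atLeast0LessThan)
  also have "\<dots> = (\<Sum>i<n. complex_of_real ((cmod (w $ i))\<^sup>2))"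
    by (intro sum.cong refl) (subst complex_norm_square, simp only:)
  finally show ?thesis by (simp only: vec_norm_sq_def of_real_sum)
qed

lemma unitary_carrier: "unitary_mat n U \<Longrightarrow> U \<in> carrier_mat n n"
  by (simp add: unitary_mat_def)

lemma unitary_madj: "unitary_mat n U \<Longrightarrow> unitary_mat n (madj U)"
  by (auto simp: unitary_mat_def)

lemma unitary_cancel:
  assumes "unitary_mat n U" "X \<in> carrier_mat n m"
  shows "U * (madj U * X) = X" "madj U * (U * X) = X"
proof -
  have U: "U \<in> carrier_mat n n" using assms(1) by (rule unitary_carrier)
  show "U * (madj U * X) = X"
    using assms U by (simp flip: assoc_mult_mat[OF U madj_carrier[OF U] assms(2)] add: unitary_mat_def)
  show "madj U * (U * X) = X"
    using assms U by (simp flip: assoc_mult_mat[OF madj_carrier[OF U] U assms(2)] add: unitary_mat_def)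
qed

lemma unitary_mult:
  assumes "unitary_mat n U" "unitary_mat n V"
  shows "unitary_mat n (U * V)"
proof -
  have U: "U \<in> carrier_mat n n" and V: "V \<in> carrier_mat n n"
    using assms by (auto simp: unitary_carrier)
  have Ua: "madj U \<in> carrier_mat n n" and Va: "madj V \<in> carrier_mat n n" using U V by auto
  have "U * V * madj (U * V) = U * (V * (madj V * madj U))"
    unfolding madj_mult[OF U V] by (rule assoc_mult_mat[OF U V mult_carrier_mat[OF Va Ua]])
  also have "\<dots> = 1\<^sub>m n"
    using unitary_cancel(1)[OF assms(2) madj_carrier[OF U]] assms(1) by (simp add: unitary_mat_def)
  finally have 1: "U * V * madj (U * V) = 1\<^sub>m n" .
  have "madj (U * V) * (U * V) = madj V * (madj U * (U * V))"
    unfolding madj_mult[OF U V] by (rule assoc_mult_mat[OF Va Ua mult_carrier_mat[OF U V]])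
  also have "\<dots> = 1\<^sub>m n"
    using unitary_cancel(2)[OF assms(1) V] assms(2) by (simp add: unitary_mat_def)
  finally have 2: "madj (U * V) * (U * V) = 1\<^sub>m n" .
  show ?thesis using 1 2 U V by (simp add: unitary_mat_def)
qed

lemma unitary_conj_cancel:
  assumes U: "unitary_mat n U" and D: "D \<in> carrier_mat n n"
  shows "madj U * (U * D * madj U) * U = D"
proof -
  have Uc: "U \<in> carrier_mat n n" using U by (rule unitary_carrier)
  have "madj U * (U * D * madj U) = D * madj U"
    using unitary_cancel(2)[OF U mult_carrier_mat[OF D madj_carrier[OF Uc]]] Uc D
    by (simp add: assoc_mult_mat[OF Uc D madj_carrier[OF Uc]])
  then show ?thesis
    using U Uc D by (simp add: assoc_mult_mat[OF D madj_carrier[OF Uc] Uc] unitary_mat_def)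
qed

lemma mult_unitary_conj:
  assumes U: "unitary_mat n U" and D: "D \<in> carrier_mat n n" and L: "L \<in> carrier_mat n n"
  shows "(U * D * madj U) * (U * L * madj U) = U * (D * L) * madj U"
proof -
  have Uc: "U \<in> carrier_mat n n" using U by (rule unitary_carrier)
  have Ua: "madj U \<in> carrier_mat n n" using Uc by simp
  have LU: "L * madj U \<in> carrier_mat n n" using L Ua by simp
  have "(U * D * madj U) * (U * L * madj U) = (U * D) * (madj U * (U * (L * madj U)))"
    unfolding assoc_mult_mat[OF Uc L Ua]
    by (rule assoc_mult_mat[OF mult_carrier_mat[OF Uc D] Ua mult_carrier_mat[OF Uc LU]])
  also have "madj U * (U * (L * madj U)) = L * madj U"
    by (rule unitary_cancel(2)[OF U LU])
  also have "(U * D) * (L * madj U) = U * (D * (L * madj U))"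
    by (rule assoc_mult_mat[OF Uc D LU])
  also have "\<dots> = U * (D * L) * madj U"
    unfolding assoc_mult_mat[OF D L Ua, symmetric]
    by (rule assoc_mult_mat[OF Uc mult_carrier_mat[OF D L] Ua, symmetric])
  finally show ?thesis .
qed

lemma mtrace_unitary_conj:
  assumes U: "unitary_mat n U" and M: "M \<in> carrier_mat n n"
  shows "mtrace (U * M * madj U) = mtrace M"
proof -
  have Uc: "U \<in> carrier_mat n n" using U by (rule unitary_carrier)
  have "mtrace (U * M * madj U) = mtrace (madj U * (U * M))"
    using Uc M by (intro mtrace_mult_comm) auto
  also have "madj U * (U * M) = M" by (rule unitary_cancel(2)[OF U M])
  finally show ?thesis .
qed

lemma unitary_normalized_corthogonal:
  assumes ws: "set ws \<subseteq> carrier_vec n" "corthogonal ws" "length ws = n"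
  shows "\<exists>W. unitary_mat n W \<and>
    (\<forall>j<n. col W j = complex_of_real (1 / sqrt (vec_norm_sq n (ws ! j))) \<cdot>\<^sub>v ws ! j)"
proof -
  define s where "s j = 1 / sqrt (vec_norm_sq n (ws ! j))" for j
  define W where "W = Matrix.mat n n (\<lambda>(i,j). complex_of_real (s j) * ws ! j $ i)"
  have W: "W \<in> carrier_mat n n" by (simp add: W_def)
  have wsc: "ws ! j \<in> carrier_vec n" if "j < n" for j using ws that by auto
  have "madj W * W = 1\<^sub>m n"
  proof (rule eq_matI)
    fix j k assume "j < dim_row (1\<^sub>m n)" "k < dim_col (1\<^sub>m n)"
    then have j: "j < n" and k: "k < n" by auto
    have "(madj W * W) $$ (j,k) = complex_of_real (s j * s k) * (ws ! k \<bullet>c ws ! j)"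
      using j k wsc[OF j] wsc[OF k]
      by (simp add: W_def madj_mult_eq[OF W W] scalar_prod_def atLeast0LessThan sum_distrib_left mult_ac)
    also have "\<dots> = 1\<^sub>m n $$ (j,k)"
    proof (cases "j = k")
      case True
      have "ws ! k \<bullet>c ws ! k \<noteq> 0" using corthogonalD[OF ws(2)] k ws(3) by auto
      then have "vec_norm_sq n (ws ! k) \<noteq> 0"
        using cscalar_self_eq_vec_norm_sq[OF wsc[OF k]] by auto
      moreover have "vec_norm_sq n (ws ! k) \<ge> 0" by (simp add: vec_norm_sq_def sum_nonneg)
      ultimately have "s k * s k * vec_norm_sq n (ws ! k) = 1" by (simp add: s_def)
      then show ?thesis using True cscalar_self_eq_vec_norm_sq[OF wsc[OF k]] k
        by (simp flip: of_real_mult)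
    next
      case False
      then show ?thesis using corthogonalD[OF ws(2)] j k ws(3) by auto
    qed
    finally show "(madj W * W) $$ (j,k) = 1\<^sub>m n $$ (j,k)" .
  qed (use W in auto)
  moreover from this have "W * madj W = 1\<^sub>m n"
    using mat_mult_left_right_inverse[OF madj_carrier[OF W] W] by simp
  moreover have "col W j = complex_of_real (s j) \<cdot>\<^sub>v ws ! j" if "j < n" for j
    using that wsc[OF that] by (intro eq_vecI) (auto simp: W_def)
  ultimately show ?thesis using W unfolding unitary_mat_def s_def by blast
qed

lemma unitary_with_first_column:
  assumes v: "v \<in> carrier_vec n" "v \<noteq> 0\<^sub>v n" and n: "n > 0"
  shows "\<exists>W c. unitary_mat n W \<and> col W 0 = c \<cdot>\<^sub>v v"
proof -
  interpret cof_vec_space n "TYPE(complex)" .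
  define b where "b = basis_completion v"
  from basis_completion[OF v, folded b_def]
  have dist_b: "distinct b" and indep: "\<not> lin_dep (set b)" and bc: "set b \<subseteq> carrier_vec n"
    and hdb: "hd b = v" and len_b: "length b = n" by auto
  from hdb len_b n obtain vs where bv: "b = v # vs" by (cases b) auto
  define ws where "ws = gram_schmidt n b"
  from gram_schmidt_result[OF bc dist_b indep refl, folded ws_def]
  have ws: "set ws \<subseteq> carrier_vec n" "corthogonal ws" "length ws = n"
    by (auto simp: len_b)
  have ws0: "ws ! 0 = v"
    using gram_schmidt_hd[OF v(1), of vs, folded bv ws_def] ws(3) n by (cases ws) auto
  show ?thesis using unitary_normalized_corthogonal[OF ws] n ws0 by blast
qed

definition block_diag_scalar :: "complex \<Rightarrow> complex mat \<Rightarrow> complex mat" where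
  "block_diag_scalar c B = Matrix.mat (Suc (dim_row B)) (Suc (dim_col B)) (\<lambda>(i,j).
     if i = 0 \<and> j = 0 then c else if i = 0 \<or> j = 0 then 0 else B $$ (i - 1, j - 1))"

lemma block_diag_scalar_dims[simp]:
  "dim_row (block_diag_scalar c B) = Suc (dim_row B)" "dim_col (block_diag_scalar c B) = Suc (dim_col B)"
  by (simp_all add: block_diag_scalar_def)

lemma block_diag_scalar_carrier[simp]:
  "B \<in> carrier_mat n m \<Longrightarrow> block_diag_scalar c B \<in> carrier_mat (Suc n) (Suc m)"
  by (simp add: block_diag_scalar_def)

lemma block_diag_scalar_index:
  "i < Suc (dim_row B) \<Longrightarrow> j < Suc (dim_col B) \<Longrightarrow> block_diag_scalar c B $$ (i,j) =
    (if i = 0 \<and> j = 0 then c else if i = 0 \<or> j = 0 then 0 else B $$ (i - 1, j - 1))"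
  by (simp add: block_diag_scalar_def)

lemma block_diag_scalar_mult:
  assumes B: "B \<in> carrier_mat n n" and C: "C \<in> carrier_mat n n"
  shows "block_diag_scalar a B * block_diag_scalar b C = block_diag_scalar (a * b) (B * C)"
proof (rule eq_matI)
  fix i j assume "i < dim_row (block_diag_scalar (a * b) (B * C))" "j < dim_col (block_diag_scalar (a * b) (B * C))"
  then have i: "i < Suc n" and j: "j < Suc n" using B C by auto
  have "(block_diag_scalar a B * block_diag_scalar b C) $$ (i,j) =
      (\<Sum>k<Suc n. block_diag_scalar a B $$ (i,k) * block_diag_scalar b C $$ (k,j))"
    using i j B C by (simp add: scalar_prod_def atLeast0LessThan)
  also have "\<dots> = block_diag_scalar a B $$ (i,0) * block_diag_scalar b C $$ (0,j) +
      (\<Sum>k<n. block_diag_scalar a B $$ (i, Suc k) * block_diag_scalar b C $$ (Suc k, j))"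
    by (rule sum.lessThan_Suc_shift)
  also have "\<dots> = block_diag_scalar (a * b) (B * C) $$ (i,j)"
    using i j B C
    by (cases i; cases j) (auto simp: block_diag_scalar_index scalar_prod_def atLeast0LessThan)
  finally show "(block_diag_scalar a B * block_diag_scalar b C) $$ (i,j) =
      block_diag_scalar (a * b) (B * C) $$ (i,j)" .
qed (use B C in auto)

lemma madj_block_diag_scalar:
  "B \<in> carrier_mat n n \<Longrightarrow> madj (block_diag_scalar c B) = block_diag_scalar (cnj c) (madj B)"
  by (rule eq_matI) (auto simp: block_diag_scalar_index)

lemma unitary_block_diag_scalar:
  assumes "unitary_mat n U"
  shows "unitary_mat (Suc n) (block_diag_scalar 1 U)"
proof -
  have U: "U \<in> carrier_mat n n" and Ua: "madj U \<in> carrier_mat n n"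
    using assms by (auto simp: unitary_carrier)
  have one: "block_diag_scalar 1 (1\<^sub>m n) = 1\<^sub>m (Suc n)"
    by (rule eq_matI) (auto simp: block_diag_scalar_index gr0_conv_Suc)
  show ?thesis
    using assms U unfolding unitary_mat_def
    by (simp add: madj_block_diag_scalar[OF U] block_diag_scalar_mult[OF U Ua]
        block_diag_scalar_mult[OF Ua U] one)
qed

lemma block_diag_scalar_diag:
  "block_diag_scalar (f 0) (mat_diag n (\<lambda>i. f (Suc i))) = mat_diag (Suc n) f"
  by (rule eq_matI) (auto simp: block_diag_scalar_index mat_diag_def gr0_conv_Suc)

lemma unitary_conj_first_column:
  assumes A: "A \<in> carrier_mat n n" and W: "unitary_mat n W"
    and ev: "A *\<^sub>v col W 0 = e \<cdot>\<^sub>v col W 0" and i: "i < n"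
  shows "(madj W * A * W) $$ (i,0) = (if i = 0 then e else 0)"
proof -
  have Wc: "W \<in> carrier_mat n n" using W by (rule unitary_carrier)
  have Wa: "madj W \<in> carrier_mat n n" using Wc by simp
  have col: "col W 0 \<in> carrier_vec n" by (rule carrier_vecI) (use Wc in simp)
  have "col (madj W * A * W) 0 = (madj W * A) *\<^sub>v col W 0"
    by (rule col_mult2[OF mult_carrier_mat[OF Wa A] Wc]) (use i in simp)
  also have "\<dots> = e \<cdot>\<^sub>v (madj W *\<^sub>v col W 0)"
    unfolding assoc_mult_mat_vec[OF Wa A col] ev by (rule mult_mat_vec[OF Wa col])
  also have "madj W *\<^sub>v col W 0 = col (madj W * W) 0"
    by (rule col_mult2[OF Wa Wc, symmetric]) (use i in simp)
  also have "\<dots> = unit_vec n 0" using W col_one[of 0 n] i by (simp add: unitary_mat_def)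
  finally have "col (madj W * A * W) 0 $ i = (e \<cdot>\<^sub>v unit_vec n 0) $ i" by simp
  then show ?thesis using Wc A i by simp
qed

lemma hermitian_first_column_block:
  assumes A: "A \<in> carrier_mat (Suc n) (Suc n)" "madj A = A"
    and col0: "\<And>i. i < Suc n \<Longrightarrow> A $$ (i,0) = (if i = 0 then e else 0)"
  shows "\<exists>(r :: real) B. B \<in> carrier_mat n n \<and> madj B = B \<and> A = block_diag_scalar (complex_of_real r) B"
proof -
  have herm: "A $$ (j,i) = cnj (A $$ (i,j))" if "i < Suc n" "j < Suc n" for i j
    by (rule hermitian_index[OF A(2,1) that])
  have "cnj e = e" using herm[of 0 0] col0[of 0] by simp
  then have e: "e = complex_of_real (Re e)" by (simp add: complex_eq_iff)
  define B where "B = Matrix.mat n n (\<lambda>(i,j). A $$ (Suc i, Suc j))"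
  have B: "B \<in> carrier_mat n n" by (simp add: B_def)
  have "A = block_diag_scalar e B"
  proof (rule eq_matI)
    fix i j assume "i < dim_row (block_diag_scalar e B)" "j < dim_col (block_diag_scalar e B)"
    then have i: "i < Suc n" and j: "j < Suc n" using B by auto
    show "A $$ (i,j) = block_diag_scalar e B $$ (i,j)"
    proof (cases "i = 0 \<or> j = 0")
      case True
      then have "A $$ (i,j) = (if i = 0 \<and> j = 0 then e else 0)"
        using col0[OF i] col0[OF j] herm[OF j i] by auto
      then show ?thesis using True i j B by (simp add: block_diag_scalar_index)
    next
      case False
      then show ?thesis using i j B by (auto simp: block_diag_scalar_index B_def gr0_conv_Suc)
    qed
  qed (use A B in auto)
  moreover have "madj B = B"
  proof (rule eq_matI)
    fix i j assume "i < dim_row B" "j < dim_col B"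
    then have ij: "Suc i < Suc n" "Suc j < Suc n" using B by auto
    have "madj B $$ (i,j) = cnj (A $$ (Suc j, Suc i))" using ij B by (simp add: B_def)
    also have "\<dots> = A $$ (Suc i, Suc j)" using herm[OF ij] by simp
    finally show "madj B $$ (i,j) = B $$ (i,j)" using ij by (simp add: B_def)
  qed (use B in auto)
  ultimately show ?thesis using B e by metis
qed

lemma hermitian_madj_conj:
  assumes "A \<in> carrier_mat n n" "madj A = A" "W \<in> carrier_mat n n"
  shows "madj (madj W * A * W) = madj W * A * W"
proof -
  have Wa: "madj W \<in> carrier_mat n n" using assms(3) by simp
  show ?thesis
    unfolding madj_mult[OF mult_carrier_mat[OF Wa assms(1)] assms(3)] madj_mult[OF Wa assms(1)] assms(2) madj_madj
    by (rule assoc_mult_mat[OF Wa assms(1,3), symmetric])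
qed

lemma block_diag_scalar_conj:
  assumes V: "V \<in> carrier_mat n n" and D: "D \<in> carrier_mat n n"
  shows "block_diag_scalar c (V * D * madj V) =
    block_diag_scalar 1 V * block_diag_scalar c D * madj (block_diag_scalar 1 V)"
  unfolding madj_block_diag_scalar[OF V] block_diag_scalar_mult[OF V D]
    block_diag_scalar_mult[OF mult_carrier_mat[OF V D] madj_carrier[OF V]]
  by simp

lemma conj_mult_conj:
  assumes "W \<in> carrier_mat n n" "E \<in> carrier_mat n n" "D \<in> carrier_mat n n"
  shows "W * (E * D * madj E) * madj W = (W * E) * D * madj (W * E)"
proof -
  have Ea: "madj E \<in> carrier_mat n n" and Wa: "madj W \<in> carrier_mat n n" using assms by auto
  have ED: "E * D \<in> carrier_mat n n" using assms by simp
  have "W * (E * D * madj E) * madj W = W * (E * D * madj E * madj W)"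
    by (rule assoc_mult_mat[OF assms(1) mult_carrier_mat[OF ED Ea] Wa])
  also have "E * D * madj E * madj W = E * D * (madj E * madj W)"
    by (rule assoc_mult_mat[OF ED Ea Wa])
  also have "W * (E * D * (madj E * madj W)) = W * (E * D) * (madj E * madj W)"
    by (rule assoc_mult_mat[OF assms(1) ED mult_carrier_mat[OF Ea Wa], symmetric])
  also have "W * (E * D) = W * E * D"
    by (rule assoc_mult_mat[OF assms, symmetric])
  finally show ?thesis using madj_mult[OF assms(1-2)] by simp
qed

lemma hermitian_spectral:
  "A \<in> carrier_mat n n \<Longrightarrow> madj A = A \<Longrightarrow>
   \<exists>U lam. unitary_mat n U \<and> A = U * mat_diag n (\<lambda>i. complex_of_real (lam i)) * madj U"
proof (induction n arbitrary: A)
  case 0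
  then have "A = 1\<^sub>m 0 * mat_diag 0 (\<lambda>i. complex_of_real 0) * madj (1\<^sub>m 0)" by (intro eq_matI) auto
  moreover have "unitary_mat 0 (1\<^sub>m 0)" by (auto simp: unitary_mat_def)
  ultimately show ?case by (intro exI[of _ "1\<^sub>m 0"] exI[of _ "\<lambda>_. 0 :: real"]) simp
next
  case (Suc n)
  obtain e where "eigenvalue A e" using spectrum_non_empty[OF Suc.prems(1)] by (auto simp: spectrum_def)
  then obtain v where "eigenvector A v e" by (auto simp: eigenvalue_def)
  then have v: "v \<in> carrier_vec (Suc n)" "v \<noteq> 0\<^sub>v (Suc n)" and Av: "A *\<^sub>v v = e \<cdot>\<^sub>v v"
    using Suc.prems(1) unfolding eigenvector_def by auto
  obtain W c where W: "unitary_mat (Suc n) W" and Wv: "col W 0 = c \<cdot>\<^sub>v v"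
    using unitary_with_first_column[OF v] by blast
  have Wc: "W \<in> carrier_mat (Suc n) (Suc n)" using W by (rule unitary_carrier)
  have "A *\<^sub>v col W 0 = e \<cdot>\<^sub>v col W 0"
    unfolding Wv mult_mat_vec[OF Suc.prems(1) v(1)] Av by (simp add: smult_smult_assoc mult.commute)
  then have "(madj W * A * W) $$ (i,0) = (if i = 0 then e else 0)" if "i < Suc n" for i
    using unitary_conj_first_column[OF Suc.prems(1) W _ that] by blast
  moreover have "madj W * A * W \<in> carrier_mat (Suc n) (Suc n)"
    using Wc Suc.prems(1) by (simp add: mult_carrier_mat[OF mult_carrier_mat[OF madj_carrier[OF Wc] Suc.prems(1)] Wc])
  ultimately obtain r B where B: "B \<in> carrier_mat n n" "madj B = B"
    and A': "madj W * A * W = block_diag_scalar (complex_of_real r) B"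
    using hermitian_first_column_block hermitian_madj_conj[OF Suc.prems Wc] by blast
  obtain V lam where V: "unitary_mat n V" and BV: "B = V * mat_diag n (\<lambda>i. complex_of_real (lam i)) * madj V"
    using Suc.IH[OF B] by blast
  have Vc: "V \<in> carrier_mat n n" using V by (rule unitary_carrier)
  define E where "E = block_diag_scalar 1 V"
  have E: "E \<in> carrier_mat (Suc n) (Suc n)" using Vc by (simp add: E_def)
  define mu where "mu i = (if i = 0 then r else lam (i - 1))" for i
  have "block_diag_scalar (complex_of_real r) (mat_diag n (\<lambda>i. complex_of_real (lam i))) =
      mat_diag (Suc n) (\<lambda>i. complex_of_real (mu i))"
    using block_diag_scalar_diag[of "\<lambda>i. complex_of_real (mu i)" n] by (simp add: mu_def)
  then have "madj W * A * W = E * mat_diag (Suc n) (\<lambda>i. complex_of_real (mu i)) * madj E"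
    unfolding A' BV E_def by (simp add: block_diag_scalar_conj[OF Vc])
  moreover have "A = W * (madj W * A * W) * madj W"
    using unitary_conj_cancel[OF unitary_madj[OF W] Suc.prems(1)] by simp
  ultimately have "A = (W * E) * mat_diag (Suc n) (\<lambda>i. complex_of_real (mu i)) * madj (W * E)"
    using conj_mult_conj[OF Wc E] by simp
  moreover have "unitary_mat (Suc n) (W * E)"
    unfolding E_def by (rule unitary_mult[OF W unitary_block_diag_scalar[OF V]])
  ultimately show ?case by blast
qed

section \<open>Nonnegativity of \<open>Ent\<^sub>2\<close>\<close>

text \<open>The spectral theorem is what makes the choice in \<open>mat_fun\<close> meaningful.\<close>
lemma mat_fun_spectral:
  assumes "A \<in> carrier_mat d d" "madj A = A"
  shows "\<exists>U lam. unitary_mat d U \<and> A = U * mat_diag d (\<lambda>i. complex_of_real (lam i)) * madj U \<and>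
    mat_fun d f A = U * mat_diag d (\<lambda>i. complex_of_real (f (lam i))) * madj U"
proof -
  obtain U lam where "unitary_mat d U" "A = U * mat_diag d (\<lambda>i. complex_of_real (lam i)) * madj U"
    using hermitian_spectral[OF assms] by blast
  then have "\<exists>B U lam. unitary_mat d U \<and> A = U * mat_diag d (\<lambda>i. complex_of_real (lam i)) * madj U \<and>
      B = U * mat_diag d (\<lambda>i. complex_of_real (f (lam i))) * madj U" by blast
  then show ?thesis unfolding mat_fun_def by (rule someI_ex)
qed

lemma mat_fun_carrier: "A \<in> carrier_mat d d \<Longrightarrow> madj A = A \<Longrightarrow> mat_fun d f A \<in> carrier_mat d d"
proof -
  assume "A \<in> carrier_mat d d" "madj A = A"
  then obtain U lam where U: "unitary_mat d U"
    and "mat_fun d f A = U * mat_diag d (\<lambda>i. complex_of_real (f (lam i))) * madj U"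
    using mat_fun_spectral[of A d f] by blast
  moreover have "U \<in> carrier_mat d d" using U by (rule unitary_carrier)
  ultimately show ?thesis by (metis mult_carrier_mat mat_diag_dim madj_carrier)
qed

lemma qform_unit_vec: "i < n \<Longrightarrow> qform n A (unit_vec n i) = A $$ (i,i)"
  unfolding qform_def unit_vec_def
  by (simp add: if_distrib[of cnj] if_distrib[of "\<lambda>x. x * _"] if_distrib[of "\<lambda>x. _ * x"] sum.delta
      cong: if_cong)

lemma qform_smult: "A \<in> carrier_mat n n \<Longrightarrow> qform n (c \<cdot>\<^sub>m A) v = c * qform n A v"
  unfolding qform_def by (auto simp: sum_distrib_left mult_ac intro!: sum.cong)

lemma psd_smult: "psd n A \<Longrightarrow> c \<ge> 0 \<Longrightarrow> psd n (complex_of_real c \<cdot>\<^sub>m A)"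
  unfolding psd_def by (simp add: qform_smult)

lemma conj_diag_index_eq_qform:
  assumes "U \<in> carrier_mat n n" "A \<in> carrier_mat n n" "i < n"
  shows "(madj U * A * U) $$ (i,i) = qform n A (col U i)"
proof -
  have "(madj U * A * U) $$ (i,i) = (\<Sum>p<n. \<Sum>q<n. cnj (U $$ (p,i)) * A $$ (p,q) * U $$ (q,i))"
    using assms
    by (simp add: scalar_prod_def atLeast0LessThan sum_distrib_left sum_distrib_right mult_ac)
      (subst sum.swap, simp)
  then show ?thesis unfolding qform_def using assms by simp
qed

lemma psd_eigenvalues_nonneg:
  assumes "psd n A" "unitary_mat n U" "A = U * mat_diag n (\<lambda>i. complex_of_real (lam i)) * madj U" "i < n"
  shows "lam i \<ge> 0"
proof -
  have U: "U \<in> carrier_mat n n" using assms(2) by (rule unitary_carrier)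
  have A: "A \<in> carrier_mat n n" using assms(1) by (simp add: psd_def)
  have "complex_of_real (lam i) = (madj U * A * U) $$ (i,i)"
    using unitary_conj_cancel[OF assms(2) mat_diag_dim] assms(3,4) by (simp add: mat_diag_def)
  also have "\<dots> = qform n A (col U i)" by (rule conj_diag_index_eq_qform[OF U A assms(4)])
  finally have "lam i = Re (qform n A (col U i))" by (metis Re_complex_of_real)
  moreover have "col U i \<in> carrier_vec n" using U assms(4) by simp
  ultimately show ?thesis using assms(1) by (simp add: psd_def)
qed

text \<open>Gibbs' inequality against the uniform distribution, via \<open>ln x \<le> x - 1\<close>.\<close>
lemma sum_mult_ln_ge_neg_ln:
  assumes d: "d > 0" and nn: "\<And>i. i < d \<Longrightarrow> p i \<ge> 0" and sum1: "(\<Sum>i<d. p i) = 1"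
  shows "(\<Sum>i<d. p i * ln (p i)) + ln (real d) \<ge> 0"
proof -
  have each: "p i * ln (p i) \<ge> p i - 1 / real d - p i * ln (real d)" if i: "i < d" for i
  proof (cases "p i = 0")
    case True then show ?thesis using d by simp
  next
    case False
    then have pos: "p i * real d > 0" using nn[OF i] d by simp
    have "ln (1 / (p i * real d)) \<le> 1 / (p i * real d) - 1"
      using pos by (intro ln_le_minus_one) simp
    then have "p i * (1 - 1 / (p i * real d)) \<le> p i * ln (p i * real d)"
      using pos by (intro mult_left_mono) (auto simp: ln_div zero_less_mult_iff)
    then show ?thesis using pos by (simp add: ln_mult zero_less_mult_iff field_simps)
  qed
  have "(\<Sum>i<d. p i - 1 / real d - p i * ln (real d)) \<le> (\<Sum>i<d. p i * ln (p i))"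
    by (rule sum_mono) (use each in auto)
  moreover have "(\<Sum>i<d. p i - 1 / real d - p i * ln (real d)) = - ln (real d)"
    using d sum1 by (simp add: sum_subtractf sum_distrib_right[symmetric])
  ultimately show ?thesis by simp
qed

lemma mtrace_mult_mat_log_ge:
  assumes d: "d > 0" and Y: "psd d Y" "mtrace Y = 1"
  shows "Re (mtrace (Y * mat_log d Y)) + ln (real d) \<ge> 0"
proof -
  have Yc: "Y \<in> carrier_mat d d" using Y(1) by (simp add: psd_def)
  obtain U lam where U: "unitary_mat d U"
    and Y_eq: "Y = U * mat_diag d (\<lambda>i. complex_of_real (lam i)) * madj U"
    and log_eq: "mat_log d Y = U * mat_diag d (\<lambda>i. complex_of_real (ln (lam i))) * madj U"
    using mat_fun_spectral[OF Yc psd_madj[OF Y(1)], of ln] unfolding mat_log_def by blast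
  have "complex_of_real (\<Sum>i<d. lam i) = mtrace Y"
    unfolding Y_eq mtrace_unitary_conj[OF U mat_diag_dim] by (simp add: mtrace_diag)
  then have sum1: "(\<Sum>i<d. lam i) = 1" using Y(2) by (metis of_real_eq_1_iff)
  have "Y * mat_log d Y = U * mat_diag d (\<lambda>i. complex_of_real (lam i * ln (lam i))) * madj U"
    unfolding log_eq unfolding Y_eq mult_unitary_conj[OF U mat_diag_dim mat_diag_dim]
    by (simp add: of_real_mult)
  then have "Re (mtrace (Y * mat_log d Y)) = (\<Sum>i<d. lam i * ln (lam i))"
    by (simp add: mtrace_unitary_conj[OF U mat_diag_dim] mtrace_diag flip: of_real_sum)
  then show ?thesis
    using sum_mult_ln_ge_neg_ln[OF d psd_eigenvalues_nonneg[OF Y(1) U Y_eq] sum1] by simp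
qed

lemma pd_hs_norm_sq_pos:
  assumes d: "d > 0" and X: "pd d X"
  shows "hs_norm_sq X > 0"
proof -
  have "(unit_vec d 0 :: complex vec) \<noteq> 0\<^sub>v d"
  proof
    assume "(unit_vec d 0 :: complex vec) = 0\<^sub>v d"
    then have "(unit_vec d 0 :: complex vec) $ 0 = 0\<^sub>v d $ 0" by simp
    then show False using d by simp
  qed
  then have "Re (qform d X (unit_vec d 0)) > 0"
    using X unit_vec_carrier[of d 0] unfolding pd_def by blast
  then have "X $$ (0,0) \<noteq> 0" using qform_unit_vec[OF d] by auto
  then show ?thesis using hs_norm_sq_pos[of X d d 0 0] X d by (simp add: pd_def)
qed

lemma ent2_nonneg:
  assumes d: "d > 0" and X: "pd d X"
  shows "ent2 d X \<ge> 0"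
proof -
  have Xc: "X \<in> carrier_mat d d" and hX: "madj X = X" using X by (auto simp: pd_def pd_madj)
  define t where "t = hs_norm_sq X"
  have t: "t > 0" unfolding t_def by (rule pd_hs_norm_sq_pos[OF d X])
  have trXX: "mtrace (X * X) = complex_of_real t"
    using mtrace_madj_mult_self[OF Xc] hX by (simp add: t_def hs_norm_sq_eq[OF Xc])
  define Y where "Y = (1 / mtrace (X * X)) \<cdot>\<^sub>m (X * X)"
  have Yc: "Y \<in> carrier_mat d d" using Xc by (simp add: Y_def)
  have XX: "X * X = complex_of_real t \<cdot>\<^sub>m Y"
    unfolding Y_def trXX using t by (auto simp: smult_smult_assoc)
  have "psd d Y"
    unfolding Y_def trXX using psd_smult[OF psd_gram[OF Xc], of "1 / t"] t hX by simp
  moreover have "mtrace Y = 1"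
    unfolding Y_def trXX using mtrace_smult[of "X * X" d] Xc t by (simp add: trXX)
  ultimately have gibbs: "Re (mtrace (Y * mat_log d Y)) + ln (real d) \<ge> 0"
    by (rule mtrace_mult_mat_log_ge[OF d])
  have L: "mat_log d Y \<in> carrier_mat d d"
    unfolding mat_log_def by (rule mat_fun_carrier[OF Yc psd_madj[OF \<open>psd d Y\<close>]])
  have "mtrace (X * X * (mat_log d Y + complex_of_real (ln (real d)) \<cdot>\<^sub>m 1\<^sub>m d)) =
      complex_of_real t * mtrace (Y * mat_log d Y) + complex_of_real (ln (real d)) * complex_of_real t"
    using mtrace_mult_add_smult_one[OF mult_carrier_mat[OF Xc Xc] L] trXX
      mtrace_smult[OF mult_carrier_mat[OF Yc L]]
    by (simp add: XX mult_smult_assoc_mat[OF Yc L])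
  then have "ent2 d X = t / (2 * real d) * (Re (mtrace (Y * mat_log d Y)) + ln (real d))"
    unfolding ent2_def Y_def[symmetric] by (simp add: field_simps)
  then show ?thesis using t d gibbs by simp
qed


section \<open>Hilbert--Schmidt contractivity of unital channels\<close>

definition mat_block :: "nat \<Rightarrow> nat \<Rightarrow> nat \<Rightarrow> complex mat \<Rightarrow> complex mat" where
  "mat_block d a b M = Matrix.mat d d (\<lambda>(i,j). M $$ (a * d + i, b * d + j))"

lemma ampl_index_block:
  assumes "a < k" "b < k" "i < d" "j < d"
  shows "ampl d k T M $$ (a * d + i, b * d + j) = T (mat_block d a b M) $$ (i,j)"
proof -
  have "Suc a * d \<le> k * d" "Suc b * d \<le> k * d"
    using assms(1,2) by (intro mult_le_mono1, simp)+
  then have "a * d + i < k * d" "b * d + j < k * d"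
    using assms(3,4) by simp_all
  then show ?thesis using assms by (simp add: ampl_def mat_block_def)
qed

lemma sum_lessThan_double:
  fixes f :: "nat \<Rightarrow> 'a :: comm_monoid_add"
  shows "(\<Sum>p<2 * d. f p) = (\<Sum>p<d. f p) + (\<Sum>p<d. f (d + p))"
proof -
  have "(\<Sum>p<d + k. f p) = (\<Sum>p<d. f p) + (\<Sum>p<k. f (d + p))" for k
    by (induction k) (auto simp: add.assoc)
  then show ?thesis by (simp add: mult_2)
qed

lemma qform_double:
  "qform (2 * d) M v = (\<Sum>i<d. \<Sum>j<d. cnj (v $ i) * M $$ (i,j) * v $ j)
      + (\<Sum>i<d. \<Sum>j<d. cnj (v $ i) * M $$ (i, d + j) * v $ (d + j))
      + (\<Sum>i<d. \<Sum>j<d. cnj (v $ (d + i)) * M $$ (d + i, j) * v $ j)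
      + (\<Sum>i<d. \<Sum>j<d. cnj (v $ (d + i)) * M $$ (d + i, d + j) * v $ (d + j))"
  unfolding qform_def sum_lessThan_double by (simp add: sum.distrib add_ac)

lemma qform_block_test_vector:
  assumes M: "M \<in> carrier_mat (2 * d) (2 * d)" "madj M = M" and one: "mat_block d 0 0 M = 1\<^sub>m d"
    and m: "m < d"
  defines "b \<equiv> \<lambda>j. M $$ (j, d + m)"
  shows "qform (2 * d) M (vec (2 * d) (\<lambda>p. if p < d then - b p else if p = d + m then 1 else 0)) =
    M $$ (d + m, d + m) - (\<Sum>j<d. cnj (b j) * b j)"
    (is "qform _ _ ?v = _")
proof -
  have M00: "M $$ (i,j) = (if i = j then 1 else 0)" if "i < d" "j < d" for i j
    using arg_cong[OF one, of "\<lambda>A. A $$ (i,j)"] that by (simp add: mat_block_def)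
  have M10: "M $$ (d + m, j) = cnj (b j)" if "j < d" for j
    using hermitian_index[OF M(2,1), of j "d + m"] m that by (simp add: b_def)
  have v_lo: "?v $ i = - b i" and v_hi: "?v $ (d + i) = (if i = m then 1 else 0)" if "i < d" for i
    using that by auto
  have "(\<Sum>i<d. \<Sum>j<d. cnj (?v $ i) * M $$ (i,j) * ?v $ j) = (\<Sum>i<d. cnj (b i) * b i)"
  proof (rule sum.cong[OF refl])
    fix i assume i: "i \<in> {..<d}"
    then have "(\<Sum>j<d. cnj (?v $ i) * M $$ (i,j) * ?v $ j) = (\<Sum>j<d. if j = i then cnj (b i) * b i else 0)"
      by (intro sum.cong refl) (simp add: v_lo M00)
    then show "(\<Sum>j<d. cnj (?v $ i) * M $$ (i,j) * ?v $ j) = cnj (b i) * b i" using i by simp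
  qed
  moreover have "(\<Sum>i<d. \<Sum>j<d. cnj (?v $ i) * M $$ (i, d + j) * ?v $ (d + j)) = - (\<Sum>i<d. cnj (b i) * b i)"
    unfolding sum_negf[symmetric]
  proof (rule sum.cong[OF refl])
    fix i assume i: "i \<in> {..<d}"
    then have "(\<Sum>j<d. cnj (?v $ i) * M $$ (i, d + j) * ?v $ (d + j)) =
        (\<Sum>j<d. if j = m then - (cnj (b i) * b i) else 0)"
      by (intro sum.cong refl) (simp add: v_lo v_hi b_def)
    then show "(\<Sum>j<d. cnj (?v $ i) * M $$ (i, d + j) * ?v $ (d + j)) = - (cnj (b i) * b i)" using m by simp
  qed
  moreover have "(\<Sum>i<d. \<Sum>j<d. cnj (?v $ (d + i)) * M $$ (d + i, j) * ?v $ j) =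
      (\<Sum>i<d. if i = m then - (\<Sum>j<d. cnj (b j) * b j) else 0)"
    by (intro sum.cong refl, rename_tac i, case_tac "i = m") (simp_all add: v_lo v_hi M10 sum_negf)
  moreover have "(\<Sum>i<d. \<Sum>j<d. cnj (?v $ (d + i)) * M $$ (d + i, d + j) * ?v $ (d + j)) =
      (\<Sum>i<d. if i = m then M $$ (d + m, d + m) else 0)"
    by (intro sum.cong refl, rename_tac i, case_tac "i = m")
      (simp_all add: v_hi if_distrib[of "\<lambda>x. _ * x"] cong: if_cong)
  ultimately show ?thesis unfolding qform_double using m by simp
qed

text \<open>A positive block matrix \<open>[[1, B], [B\<^sup>*, C]]\<close> satisfies \<open>B\<^sup>* B \<le> C\<close>; here only on the
  diagonal, tested with the vector \<open>(-B e\<^sub>m, e\<^sub>m)\<close>.\<close>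
lemma psd_block_diag_ge:
  assumes M: "psd (2 * d) M" and one: "mat_block d 0 0 M = 1\<^sub>m d" and m: "m < d"
  shows "(\<Sum>j<d. (cmod (M $$ (j, d + m)))\<^sup>2) \<le> Re (M $$ (d + m, d + m))"
proof -
  have Mc: "M \<in> carrier_mat (2 * d) (2 * d)" using M by (simp add: psd_def)
  let ?v = "vec (2 * d) (\<lambda>p. if p < d then - M $$ (p, d + m) else if p = d + m then 1 else 0)"
  have "0 \<le> Re (qform (2 * d) M ?v)" using M by (simp add: psd_def)
  also have "\<dots> = Re (M $$ (d + m, d + m)) - Re (\<Sum>j<d. cnj (M $$ (j, d + m)) * M $$ (j, d + m))"
    unfolding qform_block_test_vector[OF Mc psd_madj[OF M] one m] by (simp only: minus_complex.sel)
  also have "Re (\<Sum>j<d. cnj (M $$ (j, d + m)) * M $$ (j, d + m)) = (\<Sum>j<d. (cmod (M $$ (j, d + m)))\<^sup>2)"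
    by (simp add: Re_sum cmod_power2 sum.distrib flip: power2_eq_square)
  finally show ?thesis by simp
qed

text \<open>The Kadison--Schwarz inequality \<open>T(Y)\<^sup>* T(Y) \<le> T(Y\<^sup>* Y)\<close> on the diagonal: apply \<open>T \<otimes> id\<^sub>2\<close>
  to the positive matrix \<open>[1, Y]\<^sup>* [1, Y] = [[1, Y], [Y\<^sup>*, Y\<^sup>* Y]]\<close>.\<close>
lemma kadison_schwarz_diag:
  assumes cp: "completely_positive d T" and T1: "T (1\<^sub>m d) = 1\<^sub>m d"
    and Y: "Y \<in> carrier_mat d d" and m: "m < d"
  shows "(\<Sum>j<d. (cmod (T Y $$ (j,m)))\<^sup>2) \<le> Re (T (madj Y * Y) $$ (m,m))"
proof -
  define W where "W = Matrix.mat d (2 * d) (\<lambda>(r,q). if q < d then 1\<^sub>m d $$ (r,q) else Y $$ (r, q - d))"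
  have W: "W \<in> carrier_mat d (2 * d)" by (simp add: W_def)
  define M where "M = madj W * W"
  have M_index: "M $$ (p,q) = (\<Sum>r<d. cnj (W $$ (r,p)) * W $$ (r,q))" if "p < 2 * d" "q < 2 * d" for p q
    using that by (simp add: M_def madj_mult_eq[OF W W])
  have blocks: "mat_block d 0 0 M = 1\<^sub>m d" "mat_block d 0 1 M = Y" "mat_block d 1 1 M = madj Y * Y"
    using Y by (auto intro!: eq_matI simp: mat_block_def M_index W_def madj_mult_eq[OF Y Y]
        if_distrib[of cnj] if_distrib[of "\<lambda>x. x * _"] sum.delta cong: if_cong)
  define M' where "M' = ampl d 2 T M"
  have psd: "psd (2 * d) M'"
    using cp psd_gram[OF W] unfolding completely_positive_def M'_def M_def by blast
  have "mat_block d 0 0 M' = 1\<^sub>m d"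
  proof (rule eq_matI)
    fix i j assume "i < dim_row (1\<^sub>m d)" "j < dim_col (1\<^sub>m d)"
    then show "mat_block d 0 0 M' $$ (i,j) = 1\<^sub>m d $$ (i,j)"
      using ampl_index_block[of 0 2 0 i d j T M] blocks(1) T1 by (simp add: M'_def mat_block_def)
  qed (simp_all add: mat_block_def)
  from psd_block_diag_ge[OF psd this m]
  show ?thesis
    using ampl_index_block[of 0 2 1 _ d m T M] ampl_index_block[of 1 2 1 m d m T M] m blocks(2,3)
    by (simp add: M'_def)
qed

lemma hs_norm_sq_channel_le:
  assumes qc: "quantum_channel d T" and T1: "T (1\<^sub>m d) = 1\<^sub>m d" and Y: "Y \<in> carrier_mat d d"
  shows "hs_norm_sq (T Y) \<le> hs_norm_sq Y"
proof -
  have lm: "lin_map d T" and cp: "completely_positive d T" and tp: "trace_preserving d T"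
    using qc by (auto simp: quantum_channel_def)
  have TY: "T Y \<in> carrier_mat d d" and TYY: "T (madj Y * Y) \<in> carrier_mat d d"
    using lm Y mult_carrier_mat[OF madj_carrier[OF Y] Y] by (auto simp: lin_map_def)
  have "hs_norm_sq (T Y) = (\<Sum>m<d. \<Sum>j<d. (cmod (T Y $$ (j,m)))\<^sup>2)"
    by (rule hs_norm_sq_eq[OF TY])
  also have "\<dots> \<le> (\<Sum>m<d. Re (T (madj Y * Y) $$ (m,m)))"
    by (intro sum_mono kadison_schwarz_diag[OF cp T1 Y]) simp
  also have "\<dots> = Re (mtrace (T (madj Y * Y)))"
    using TYY by (simp add: mtrace_def Re_sum)
  also have "\<dots> = hs_norm_sq Y"
    using tp mult_carrier_mat[OF madj_carrier[OF Y] Y] by (simp add: trace_preserving_def hs_norm_sq_def)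
  finally show ?thesis .
qed

section \<open>The Dirichlet forms of \<open>(T\<^sup>*)\<^sup>k T\<^sup>k - id\<close>\<close>

lemma funpow_carrier: "lin_map d T \<Longrightarrow> A \<in> carrier_mat d d \<Longrightarrow> (T ^^ k) A \<in> carrier_mat d d"
  by (induction k) (auto simp: lin_map_def)

lemma decseq_hs_norm_sq_funpow:
  assumes "quantum_channel d T" "T (1\<^sub>m d) = 1\<^sub>m d" "X \<in> carrier_mat d d"
  shows "decseq (\<lambda>k. hs_norm_sq ((T ^^ k) X))"
proof (rule decseq_SucI)
  have "lin_map d T" using assms(1) by (simp add: quantum_channel_def)
  then show "hs_norm_sq ((T ^^ Suc k) X) \<le> hs_norm_sq ((T ^^ k) X)" for k
    using hs_norm_sq_channel_le[OF assms(1,2) funpow_carrier] assms(3) by simp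
qed

lemma hs_adjoint_funpow:
  assumes hs: "hs_adjoint d T Ts" and lm: "lin_map d T"
    and A: "A \<in> carrier_mat d d" and "B \<in> carrier_mat d d"
  shows "mtrace (madj ((Ts ^^ k) A) * B) = mtrace (madj A * (T ^^ k) B)"
  using assms(4)
proof (induction k arbitrary: B)
  case (Suc k)
  have "lin_map d Ts" using hs by (simp add: hs_adjoint_def)
  then have TsA: "(Ts ^^ k) A \<in> carrier_mat d d" by (rule funpow_carrier[OF _ A])
  have TB: "T B \<in> carrier_mat d d" using lm Suc.prems by (simp add: lin_map_def)
  have "mtrace (madj (Ts ((Ts ^^ k) A)) * B) = mtrace (madj ((Ts ^^ k) A) * T B)"
    using hs TsA Suc.prems by (simp add: hs_adjoint_def)
  also have "\<dots> = mtrace (madj A * (T ^^ k) (T B))" by (rule Suc.IH[OF TB])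
  finally show ?case by (simp add: funpow_swap1)
qed simp

lemma dirichlet2_funpow:
  assumes hs: "hs_adjoint d T Ts" and lm: "lin_map d T"
    and X: "X \<in> carrier_mat d d" "madj X = X"
  shows "dirichlet2 d (\<lambda>X. (Ts ^^ k) ((T ^^ k) X) - X) X = (hs_norm_sq X - hs_norm_sq ((T ^^ k) X)) / real d"
proof -
  have TX: "(T ^^ k) X \<in> carrier_mat d d" by (rule funpow_carrier[OF lm X(1)])
  define M where "M = (Ts ^^ k) ((T ^^ k) X)"
  have "lin_map d Ts" using hs by (simp add: hs_adjoint_def)
  then have M: "M \<in> carrier_mat d d" unfolding M_def by (rule funpow_carrier[OF _ TX])
  have "mtrace (M * X) = cnj (mtrace (madj (M * X)))"
    using mtrace_madj[OF mult_carrier_mat[OF M X(1)]] by simp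
  also have "mtrace (madj (M * X)) = mtrace (madj M * X)"
    unfolding madj_mult[OF M X(1)] X(2) by (rule mtrace_mult_comm[OF X(1) madj_carrier[OF M]])
  also have "\<dots> = mtrace (madj ((T ^^ k) X) * (T ^^ k) X)"
    unfolding M_def by (rule hs_adjoint_funpow[OF hs lm TX X(1)])
  finally have MX: "Re (mtrace (M * X)) = hs_norm_sq ((T ^^ k) X)"
    by (simp add: hs_norm_sq_def)
  have XX: "Re (mtrace (X * X)) = hs_norm_sq X"
    using X(2) by (simp add: hs_norm_sq_def)
  have "(M - X) * X = M * X - X * X" by (rule minus_mult_distrib_mat[OF M X(1) X(1)])
  then have "Re (mtrace ((M - X) * X)) = Re (mtrace (M * X)) - Re (mtrace (X * X))"
    using mtrace_minus[OF mult_carrier_mat[OF M X(1)] mult_carrier_mat[OF X(1) X(1)]] by simp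
  then have re: "Re (mtrace ((M - X) * X)) = hs_norm_sq ((T ^^ k) X) - hs_norm_sq X"
    unfolding MX XX .
  show ?thesis
    unfolding dirichlet2_def M_def[symmetric] re by (simp add: diff_divide_distrib)
qed

lemma dirichlet2_funpow_mono_nonneg:
  assumes ds: "doubly_stochastic d T Ts" and X: "X \<in> carrier_mat d d" "madj X = X"
  shows "mono (\<lambda>k. dirichlet2 d (\<lambda>X. (Ts ^^ k) ((T ^^ k) X) - X) X)"
    and "0 \<le> dirichlet2 d (\<lambda>X. (Ts ^^ k) ((T ^^ k) X) - X) X"
proof -
  have qc: "quantum_channel d T" and hs: "hs_adjoint d T Ts" and T1: "T (1\<^sub>m d) = 1\<^sub>m d"
    and lm: "lin_map d T"
    using ds by (auto simp: doubly_stochastic_def quantum_channel_def)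
  note dec = decseq_hs_norm_sq_funpow[OF qc T1 X(1)]
  show "mono (\<lambda>k. dirichlet2 d (\<lambda>X. (Ts ^^ k) ((T ^^ k) X) - X) X)"
    unfolding dirichlet2_funpow[OF hs lm X]
    by (intro monoI divide_right_mono diff_left_mono decseqD[OF dec]) simp_all
  show "0 \<le> dirichlet2 d (\<lambda>X. (Ts ^^ k) ((T ^^ k) X) - X) X"
    unfolding dirichlet2_funpow[OF hs lm X] using decseqD[OF dec, of 0 k] by simp
qed

lemma mono_INF_of_mono:
  fixes F :: "nat \<Rightarrow> 'a \<Rightarrow> real"
  assumes "\<And>x. x \<in> S \<Longrightarrow> mono (\<lambda>k. F k x)" and "\<And>k x. x \<in> S \<Longrightarrow> c \<le> F k x"
  shows "mono (\<lambda>k. INF x\<in>S. F k x)"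
proof (rule monoI, cases "S = {}")
  fix k l :: nat assume "k \<le> l" "S \<noteq> {}"
  show "(INF x\<in>S. F k x) \<le> (INF x\<in>S. F l x)"
  proof (rule cINF_mono)
    show "bdd_below ((\<lambda>x. F k x) ` S)" by (rule bdd_belowI2[where m = c]) (rule assms(2))
    show "\<exists>n\<in>S. F k n \<le> F l m" if "m \<in> S" for m
      using that monoD[OF assms(1)[OF that] \<open>k \<le> l\<close>] by blast
  qed fact
qed simp

theorem mainTheorem12:
  fixes d :: nat and T Ts :: "complex mat \<Rightarrow> complex mat"
  assumes "0 < d"
    and "doubly_stochastic d T Ts"
    and "primitive d T"
  shows "mono (\<lambda>k::nat. alpha2 d (\<lambda>X. (Ts ^^ k) ((T ^^ k) X) - X))"
proof -
  let ?S = "{X. pd d X \<and> ent2 d X \<noteq> 0}"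
  let ?F = "\<lambda>k X. dirichlet2 d (\<lambda>X. (Ts ^^ k) ((T ^^ k) X) - X) X / ent2 d X"
  have alpha: "alpha2 d (\<lambda>X. (Ts ^^ k) ((T ^^ k) X) - X) = (INF X\<in>?S. ?F k X)" for k
    unfolding alpha2_def setcompr_eq_image ..
  have X: "X \<in> carrier_mat d d" "madj X = X" "ent2 d X > 0" if "X \<in> ?S" for X
  proof -
    have "pd d X" "ent2 d X \<noteq> 0" using that by simp_all
    then show "X \<in> carrier_mat d d" "madj X = X" "ent2 d X > 0"
      using ent2_nonneg[OF assms(1)] pd_madj by (simp_all add: pd_def order_le_neq_trans)
  qed
  show ?thesis
    unfolding alpha
  proof (rule mono_INF_of_mono)
    show "mono (\<lambda>k. ?F k X)" if "X \<in> ?S" for X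
      using monoD[OF dirichlet2_funpow_mono_nonneg(1)[OF assms(2) X(1,2)[OF that]]] X(3)[OF that]
      by (intro monoI divide_right_mono) simp_all
    show "0 \<le> ?F k X" if "X \<in> ?S" for k X
      using dirichlet2_funpow_mono_nonneg(2)[OF assms(2) X(1,2)[OF that]] X(3)[OF that] by simp
  qed
qed

end
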